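(* Let $\mathcal{X},\mathcal{Y},\mathcal{U},\mathcal{Z}$ be finite sets, let $(X,Y)\in\mathcal{X}\times\mathcal{Y}$ have joint distribution $P_{X,Y}$ with $P_X$ and $P_Y$ of full support, and let $f:\mathcal{X}\times\mathcal{Y}\to\mathcal{U}$ and $g:\mathcal{Y}\to\mathcal{Z}$ be deterministic functions. Let $R^*$ be the optimal zero-error rate and $G_{[n]}$ the $n$-th characteristic graph (both defined in the context). Then $$R^*=\lim_{n\to\infty}\frac{1}{n}H_\chi(G_{[n]}).$$
   Context: Setting: $(X^n,Y^n)$ denotes $n$ i.i.d. copies of $(X,Y)$, with distribution $P^n_{X,Y}$. An encoder observes $X^n$ and $(g(Y_t))_{t\le n}$; a decoder observes $Y^n$ and must recover $(f(X_t,Y_t))_{t\le n}$. Let $\{0,1\}^*$ be the set of finite binary words and $l(\cdot)$ the length of a word. An $(n,R_n)$-zero-error source code is a pair $\phi_e:\mathcal{X}^n\times\mathcal{Z}^n\to\{0,1\}^*$, $\phi_d:\mathcal{Y}^n\times\{0,1\}^*\to\mathcal{U}^n$ such that (1) $\phi_e(\mathcal{X}^n\times\mathcal{Z}^n)$ is prefix-free; (2) $R_n=\frac1n\mathbb{E}[l(\phi_e(X^n,(g(Y_t))_{t\le n}))]$; (3) for all $(x^n,y^n)\in\operatorname{supp}P^n_{X,Y}$, $\phi_d(y^n,\phi_e(x^n,(g(y_t))_{t\le n}))=(f(x_t,y_t))_{t\le n}$. A rate $R$ is achievable if there is a sequence of $(n,R_n)$-zero-error codes with $\lim_n R_n=R$;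 $R^*=\inf\{R\ge0: R\text{ achievable}\}$. A probabilistic graph is a triple $(\mathcal{V},\mathcal{E},P_V)$ with vertex set $\mathcal{V}$, edge set $\mathcal{E}$ and a distribution $P_V$ on $\mathcal{V}$. A subset $\mathcal{S}\subseteq\mathcal{V}$ is independent if no two of its vertices are adjacent; a map $c:\mathcal{V}\to\mathcal{C}$ into a finite set is a coloring if every $c^{-1}(i)$ is independent. The chromatic entropy is $H_\chi(G)=\inf\{H(c(V)): c\text{ a coloring of }G\}$, where $V\sim P_V$. The characteristic graph $G_{[n]}$ has vertex set $\mathcal{X}^n\times\mathcal{Z}^n$ with distribution $P^n_{X,g(Y)}$ (the law of $(X^n,(g(Y_t))_{t\le n})$), and $(x^n,z^n)$, $(x'^n,z'^n)$ are adjacent iff $z^n=z'^n$ and there is $y^n\in\mathcal{Y}^n$ with $g(y_t)=z_t$ for all $t$ such that $P_{X,Y}(x_t,y_t)P_{X,Y}(x'_t,y_t)>0$ for all $t\le n$ and $f(x_t,y_t)\ne f(x'_t,y_t)$ for some $t\le n$. *)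

theory Defs
  imports Complex_Main
begin

definition is_joint_dist :: "('x::finite \<Rightarrow> 'y::finite \<Rightarrow> real) \<Rightarrow> bool" where
  "is_joint_dist P \<longleftrightarrow> (\<forall>x y. P x y \<ge> 0) \<and> (\<Sum>x\<in>UNIV. \<Sum>y\<in>UNIV. P x y) = 1"

definition full_marginals :: "('x::finite \<Rightarrow> 'y::finite \<Rightarrow> real) \<Rightarrow> bool" where
  "full_marginals P \<longleftrightarrow> (\<forall>x. (\<Sum>y\<in>UNIV. P x y) > 0) \<and> (\<forall>y. (\<Sum>x\<in>UNIV. P x y) > 0)"

definition Pn :: "('x \<Rightarrow> 'y \<Rightarrow> real) \<Rightarrow> nat \<Rightarrow> 'x list \<Rightarrow> 'y list \<Rightarrow> real" where
  "Pn P n xs ys = (\<Prod>i<n. P (xs ! i) (ys ! i))"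

definition prefix_free :: "bool list set \<Rightarrow> bool" where
  "prefix_free S \<longleftrightarrow> (\<forall>w\<in>S. \<forall>w'\<in>S. w \<noteq> w' \<longrightarrow> \<not> (\<exists>v. w' = w @ v))"

definition zero_error_code ::
  "('x::finite \<Rightarrow> 'y::finite \<Rightarrow> real) \<Rightarrow> ('x \<Rightarrow> 'y \<Rightarrow> 'u) \<Rightarrow> ('y \<Rightarrow> 'z::finite) \<Rightarrow> nat \<Rightarrow> real
    \<Rightarrow> ('x list \<Rightarrow> 'z list \<Rightarrow> bool list) \<Rightarrow> ('y list \<Rightarrow> bool list \<Rightarrow> 'u list) \<Rightarrow> bool" where
  "zero_error_code P f g n R enc dec \<longleftrightarrow>
     prefix_free ((\<lambda>(xs, zs). enc xs zs) ` {(xs, zs). length xs = n \<and> length zs = n})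
   \<and> R = (1 / real n) * (\<Sum>xs\<in>{xs. length xs = n}. \<Sum>ys\<in>{ys. length ys = n}.
            Pn P n xs ys * real (length (enc xs (map g ys))))
   \<and> (\<forall>xs ys. length xs = n \<and> length ys = n \<and> Pn P n xs ys > 0 \<longrightarrow>
            dec ys (enc xs (map g ys)) = map2 f xs ys)"

definition achievable_rate ::
  "('x::finite \<Rightarrow> 'y::finite \<Rightarrow> real) \<Rightarrow> ('x \<Rightarrow> 'y \<Rightarrow> 'u) \<Rightarrow> ('y \<Rightarrow> 'z::finite) \<Rightarrow> real \<Rightarrow> bool" where
  "achievable_rate P f g R \<longleftrightarrow>
     (\<exists>r :: nat \<Rightarrow> real. (\<forall>n>0. \<exists>enc dec. zero_error_code P f g n (r n) enc dec)
                       \<and> r \<longlonglongrightarrow> R)"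

definition optimal_rate ::
  "('x::finite \<Rightarrow> 'y::finite \<Rightarrow> real) \<Rightarrow> ('x \<Rightarrow> 'y \<Rightarrow> 'u) \<Rightarrow> ('y \<Rightarrow> 'z::finite) \<Rightarrow> real" where
  "optimal_rate P f g = Inf {R. R \<ge> 0 \<and> achievable_rate P f g R}"

definition char_vertices :: "nat \<Rightarrow> ('x list \<times> 'z list) set" where
  "char_vertices n = {(xs, zs). length xs = n \<and> length zs = n}"

definition char_dist ::
  "('x::finite \<Rightarrow> 'y::finite \<Rightarrow> real) \<Rightarrow> ('y \<Rightarrow> 'z) \<Rightarrow> nat \<Rightarrow> 'x list \<times> 'z list \<Rightarrow> real" where
  "char_dist P g n v = (\<Sum>ys\<in>{ys. length ys = n \<and> map g ys = snd v}. Pn P n (fst v) ys)"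

definition char_adj ::
  "('x::finite \<Rightarrow> 'y::finite \<Rightarrow> real) \<Rightarrow> ('x \<Rightarrow> 'y \<Rightarrow> 'u) \<Rightarrow> ('y \<Rightarrow> 'z) \<Rightarrow> nat
    \<Rightarrow> 'x list \<times> 'z list \<Rightarrow> 'x list \<times> 'z list \<Rightarrow> bool" where
  "char_adj P f g n v v' \<longleftrightarrow>
     snd v = snd v' \<and>
     (\<exists>ys. length ys = n \<and> (\<forall>t<n. g (ys ! t) = snd v ! t) \<and>
        (\<forall>t<n. P (fst v ! t) (ys ! t) * P (fst v' ! t) (ys ! t) > 0) \<and>
        (\<exists>t<n. f (fst v ! t) (ys ! t) \<noteq> f (fst v' ! t) (ys ! t)))"

text \<open>General probabilistic graph notions: coloring and chromatic entropy (in bits).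
  Colours are taken in nat; any coloring into a finite set can be relabelled injectively into nat.\<close>
definition is_coloring :: "'v set \<Rightarrow> ('v \<Rightarrow> 'v \<Rightarrow> bool) \<Rightarrow> ('v \<Rightarrow> nat) \<Rightarrow> bool" where
  "is_coloring V E c \<longleftrightarrow> (\<forall>v\<in>V. \<forall>v'\<in>V. c v = c v' \<longrightarrow> \<not> E v v')"

definition entropy_of_map :: "'v set \<Rightarrow> ('v \<Rightarrow> real) \<Rightarrow> ('v \<Rightarrow> nat) \<Rightarrow> real" where
  "entropy_of_map V Q c =
     - (\<Sum>k\<in>c ` V. (\<Sum>v\<in>{v\<in>V. c v = k}. Q v) * log 2 (\<Sum>v\<in>{v\<in>V. c v = k}. Q v))"

definition chromatic_entropy :: "'v set \<Rightarrow> ('v \<Rightarrow> 'v \<Rightarrow> bool) \<Rightarrow> ('v \<Rightarrow> real) \<Rightarrow> real" where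
  "chromatic_entropy V E Q = Inf {entropy_of_map V Q c | c. is_coloring V E c}"

end

theory Submission
  imports Defs "HOL-Library.Countable" "HOL-Library.Sublist"
begin

text \<open>A zero-error code of block length n amounts to a prefix-free encoding of a colouring of
  G_[n]: adjacent vertices share a side-information sequence on which the decoder must output
  different values of f, so they need different codewords. Kraft's and Gibbs' inequalities
  therefore give n R_n \<ge> H_chi(G_[n]), while Shannon code lengths for a near-optimal colouring,
  realised by the converse of Kraft's inequality, give codes with n R_n \<le> H_chi(G_[n]) + 3.
  Colouring the two halves of a vertex of G_[m+n] separately shows that H_chi(G_[n]) is
  subadditive, so by Fekete's lemma H_chi(G_[n]) / n converges to its infimum, which the two
  bounds identify with the optimal rate.\<close>

section \<open>Sequences and product distributions\<close>

abbreviation lists_of_length :: "nat \<Rightarrow> 'a list set" where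
  "lists_of_length n \<equiv> {xs. length xs = n}"

lemma finite_lists_of_length [simp]: "finite (lists_of_length n :: 'a::finite list set)"
  using finite_lists_length_eq[of "UNIV :: 'a set" n] by simp

lemma card_lists_of_length: "card (lists_of_length n :: 'a::finite list set) = card (UNIV :: 'a set) ^ n"
  using card_lists_length_eq[of "UNIV :: 'a set" n] by simp

lemma sum_lists_of_length_add:
  fixes h :: "'a::finite list \<Rightarrow> 'b::comm_monoid_add"
  shows "(\<Sum>w\<in>lists_of_length (m + n). h w) = (\<Sum>a\<in>lists_of_length m. \<Sum>b\<in>lists_of_length n. h (a @ b))"
proof -
  have "lists_of_length (m + n) = (\<lambda>(a, b). a @ b) ` (lists_of_length m \<times> (lists_of_length n :: 'a list set))"
  proof (intro set_eqI iffI)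
    fix w :: "'a list" assume "w \<in> lists_of_length (m + n)"
    then show "w \<in> (\<lambda>(a, b). a @ b) ` (lists_of_length m \<times> lists_of_length n)"
      by (intro image_eqI[of _ _ "(take m w, drop m w)"]) auto
  qed auto
  moreover have "inj_on (\<lambda>(a, b). a @ b) (lists_of_length m \<times> (lists_of_length n :: 'a list set))"
    by (auto simp: inj_on_def)
  ultimately have "(\<Sum>w\<in>lists_of_length (m + n). h w)
      = (\<Sum>p\<in>lists_of_length m \<times> lists_of_length n. h ((\<lambda>(a, b). a @ b) p))"
    by (simp only: sum.reindex comp_def)
  then show ?thesis
    by (simp add: sum.cartesian_product case_prod_beta)
qed

lemma sum_lists_of_length_1:
  fixes h :: "'a::finite list \<Rightarrow> 'b::comm_monoid_add"
  shows "(\<Sum>w\<in>lists_of_length 1. h w) = (\<Sum>x\<in>UNIV. h [x])"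
proof -
  have "lists_of_length 1 = (\<lambda>x. [x]) ` (UNIV :: 'a set)"
    by (auto simp: length_Suc_conv)
  then show ?thesis
    by (simp add: sum.reindex inj_on_def)
qed

lemma Pn_append:
  assumes "length xs = m" "length ys = m"
  shows "Pn P (m + n) (xs @ xs') (ys @ ys') = Pn P m xs ys * Pn P n xs' ys'"
proof (induction n)
  case (Suc n)
  then show ?case
    using assms by (simp add: Pn_def nth_append mult.assoc)
qed (use assms in \<open>simp add: Pn_def nth_append\<close>)

lemma sum_Pn:
  fixes P :: "'x::finite \<Rightarrow> 'y::finite \<Rightarrow> real"
  shows "(\<Sum>xs\<in>lists_of_length n. \<Sum>ys\<in>lists_of_length n. Pn P n xs ys) = (\<Sum>x\<in>UNIV. \<Sum>y\<in>UNIV. P x y) ^ n"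
proof (induction n)
  case 0
  then show ?case by (simp add: Pn_def)
next
  case (Suc n)
  have "(\<Sum>xs\<in>lists_of_length (n + 1). \<Sum>ys\<in>lists_of_length (n + 1). Pn P (n + 1) xs ys)
      = (\<Sum>a\<in>lists_of_length n. \<Sum>b\<in>lists_of_length 1. \<Sum>c\<in>lists_of_length n. \<Sum>d\<in>lists_of_length 1.
           Pn P n a c * Pn P 1 b d)"
    unfolding sum_lists_of_length_add by (intro sum.cong refl) (auto simp: Pn_append[where n = 1, simplified])
  also have "\<dots> = (\<Sum>a\<in>lists_of_length n. \<Sum>c\<in>lists_of_length n. Pn P n a c)
                  * (\<Sum>b\<in>lists_of_length 1. \<Sum>d\<in>lists_of_length 1. Pn P 1 b d)"
    by (simp add: sum_product sum.swap[of _ "lists_of_length 1"])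
  also have "(\<Sum>b\<in>lists_of_length 1. \<Sum>d\<in>lists_of_length 1. Pn P 1 b d) = (\<Sum>x\<in>UNIV. \<Sum>y\<in>UNIV. P x y)"
    unfolding sum_lists_of_length_1 by (simp add: Pn_def)
  finally show ?case
    using Suc by simp
qed

lemma Pn_nonneg: "is_joint_dist P \<Longrightarrow> Pn P n xs ys \<ge> 0"
  by (simp add: Pn_def is_joint_dist_def prod_nonneg)

lemma Pn_pos_iff:
  assumes "is_joint_dist P"
  shows "Pn P n xs ys > 0 \<longleftrightarrow> (\<forall>t<n. P (xs ! t) (ys ! t) > 0)"
proof -
  have "P x y > 0 \<longleftrightarrow> P x y \<noteq> 0" for x y
    using assms by (auto simp: is_joint_dist_def less_le)
  moreover have "Pn P n xs ys > 0 \<longleftrightarrow> Pn P n xs ys \<noteq> 0"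
    using Pn_nonneg[OF assms] by (auto simp: less_le)
  ultimately show ?thesis
    by (simp add: Pn_def prod_zero_iff Ball_def)
qed

section \<open>Entropy of a colouring\<close>

definition finite_distribution :: "'v set \<Rightarrow> ('v \<Rightarrow> real) \<Rightarrow> bool" where
  "finite_distribution V Q \<longleftrightarrow> finite V \<and> (\<forall>v\<in>V. Q v \<ge> 0) \<and> (\<Sum>v\<in>V. Q v) = 1"

definition colour_mass :: "'v set \<Rightarrow> ('v \<Rightarrow> real) \<Rightarrow> ('v \<Rightarrow> nat) \<Rightarrow> nat \<Rightarrow> real" where
  "colour_mass V Q c k = (\<Sum>v\<in>{v\<in>V. c v = k}. Q v)"

lemma entropy_of_map_colour_mass:
  "entropy_of_map V Q c = - (\<Sum>k\<in>c ` V. colour_mass V Q c k * log 2 (colour_mass V Q c k))"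
  by (simp add: entropy_of_map_def colour_mass_def)

lemma sum_colour_mass_mult:
  assumes "finite V"
  shows "(\<Sum>v\<in>V. Q v * F (c v)) = (\<Sum>k\<in>c ` V. colour_mass V Q c k * F k)"
proof -
  have "(\<Sum>v\<in>V. Q v * F (c v)) = (\<Sum>k\<in>c ` V. \<Sum>v\<in>{v\<in>V. c v = k}. Q v * F (c v))"
    by (rule sum.image_gen[OF assms])
  also have "\<dots> = (\<Sum>k\<in>c ` V. colour_mass V Q c k * F k)"
    unfolding colour_mass_def by (intro sum.cong refl) (auto simp: sum_distrib_right)
  finally show ?thesis .
qed

lemma sum_colour_mass:
  "finite_distribution V Q \<Longrightarrow> (\<Sum>k\<in>c ` V. colour_mass V Q c k) = 1"
  using sum_colour_mass_mult[where V = V and Q = Q and F = "\<lambda>_. 1" and c = c]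
  by (simp add: finite_distribution_def)

lemma colour_mass_bounds:
  assumes "finite_distribution V Q"
  shows "0 \<le> colour_mass V Q c k" "colour_mass V Q c k \<le> 1"
proof -
  show "0 \<le> colour_mass V Q c k"
    using assms unfolding colour_mass_def finite_distribution_def by (intro sum_nonneg) auto
  have "colour_mass V Q c k \<le> (\<Sum>v\<in>V. Q v)"
    using assms unfolding colour_mass_def finite_distribution_def by (intro sum_mono2) auto
  then show "colour_mass V Q c k \<le> 1"
    using assms by (simp add: finite_distribution_def)
qed

lemma entropy_of_map_nonneg:
  assumes "finite_distribution V Q"
  shows "entropy_of_map V Q c \<ge> 0"
proof -
  have "colour_mass V Q c k * log 2 (colour_mass V Q c k) \<le> 0" for k
    using colour_mass_bounds[OF assms, of c k]
    by (cases "colour_mass V Q c k = 0") (auto intro!: mult_nonneg_nonpos)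
  then show ?thesis
    unfolding entropy_of_map_colour_mass by (simp add: sum_nonpos)
qed

text \<open>Pointwise form of Gibbs' inequality, from \<open>ln x \<le> x - 1\<close> at \<open>x = 2\<^sup>-\<^sup>l / m\<close>.\<close>

lemma neg_mult_log_le:
  fixes m :: real
  assumes "m \<ge> 0"
  shows "- (m * log 2 m) \<le> m * l + ((1/2) ^ l - m) / ln 2"
proof (cases "m = 0")
  case False
  then have m: "m > 0"
    using assms by simp
  have "ln ((1/2) ^ l / m) \<le> (1/2) ^ l / m - 1"
    using m by (intro ln_le_minus_one) simp
  moreover have "ln ((1/2::real) ^ l / m) = - (l * ln 2) - ln m"
    using m by (simp add: ln_div ln_realpow)
  ultimately have "m * (- (l * ln 2) - ln m) \<le> m * ((1/2) ^ l / m - 1)"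
    using m by (intro mult_left_mono) auto
  then have "- (m * ln m) \<le> m * l * ln 2 + ((1/2) ^ l - m)"
    using m by (simp add: algebra_simps)
  then have "- (m * ln m) / ln 2 \<le> (m * l * ln 2 + ((1/2) ^ l - m)) / ln 2"
    by (intro divide_right_mono) auto
  then show ?thesis
    by (simp add: log_def add_divide_distrib)
qed simp

lemma entropy_of_map_le_expected_length:
  assumes Q: "finite_distribution V Q"
    and kraft: "(\<Sum>k\<in>c ` V. (1/2::real) ^ len k) \<le> 1"
  shows "entropy_of_map V Q c \<le> (\<Sum>v\<in>V. Q v * real (len (c v)))"
proof -
  let ?m = "colour_mass V Q c"
  have "entropy_of_map V Q c = (\<Sum>k\<in>c ` V. - (?m k * log 2 (?m k)))"
    by (simp add: entropy_of_map_colour_mass sum_negf)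
  also have "\<dots> \<le> (\<Sum>k\<in>c ` V. ?m k * len k + ((1/2) ^ len k - ?m k) / ln 2)"
    by (intro sum_mono neg_mult_log_le colour_mass_bounds[OF Q])
  also have "\<dots> = (\<Sum>k\<in>c ` V. ?m k * len k)
                  + ((\<Sum>k\<in>c ` V. (1/2) ^ len k) - (\<Sum>k\<in>c ` V. ?m k)) / ln 2"
    by (simp add: sum.distrib sum_divide_distrib[symmetric] sum_subtractf)
  also have "\<dots> \<le> (\<Sum>k\<in>c ` V. ?m k * len k)"
    using kraft sum_colour_mass[OF Q] by (simp add: divide_nonpos_pos)
  also have "\<dots> = (\<Sum>v\<in>V. Q v * real (len (c v)))"
    using Q by (intro sum_colour_mass_mult[symmetric]) (simp add: finite_distribution_def)
  finally show ?thesis .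
qed

lemma ceiling_neg_log_bounds:
  fixes m :: real
  assumes "0 < m" "m \<le> 1"
  shows "(1/2) ^ nat \<lceil>- log 2 m\<rceil> \<le> m" "real (nat \<lceil>- log 2 m\<rceil>) \<le> - log 2 m + 1"
proof -
  have "- log 2 m \<ge> 0"
    using assms by simp
  then have l: "real (nat \<lceil>- log 2 m\<rceil>) = of_int \<lceil>- log 2 m\<rceil>"
    by simp
  have "(1/2::real) ^ nat \<lceil>- log 2 m\<rceil> = 2 powr (- real (nat \<lceil>- log 2 m\<rceil>))"
    by (simp add: powr_minus powr_realpow power_one_over inverse_eq_divide)
  also have "\<dots> \<le> 2 powr (- (- log 2 m))"
  proof (rule powr_mono)
    show "- real (nat \<lceil>- log 2 m\<rceil>) \<le> - (- log 2 m)"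
      using l le_of_int_ceiling[of "- log 2 m"] by linarith
  qed simp
  also have "\<dots> = m"
    using assms by simp
  finally show "(1/2) ^ nat \<lceil>- log 2 m\<rceil> \<le> m" .
  show "real (nat \<lceil>- log 2 m\<rceil>) \<le> - log 2 m + 1"
    using l of_int_ceiling_le_add_one[of "- log 2 m"] by simp
qed

text \<open>Shannon lengths with one extra bit: this halves their Kraft sum and leaves room for the
  colours of mass zero, which also need codewords.\<close>

definition shannon_length :: "'v set \<Rightarrow> ('v \<Rightarrow> real) \<Rightarrow> ('v \<Rightarrow> nat) \<Rightarrow> nat \<Rightarrow> nat" where
  "shannon_length V Q c k =
     (if colour_mass V Q c k > 0 then nat \<lceil>- log 2 (colour_mass V Q c k)\<rceil> + 1 else card (c ` V) + 1)"

lemma colour_mass_eq_0: "finite_distribution V Q \<Longrightarrow> \<not> colour_mass V Q c k > 0 \<Longrightarrow> colour_mass V Q c k = 0"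
  using colour_mass_bounds(1)[of V Q c k] by linarith

lemma kraft_sum_shannon_length:
  assumes Q: "finite_distribution V Q"
  shows "(\<Sum>k\<in>c ` V. (1/2::real) ^ shannon_length V Q c k) \<le> 1"
proof -
  let ?m = "colour_mass V Q c" and ?N = "card (c ` V)"
  have "(1/2::real) ^ shannon_length V Q c k \<le> ?m k / 2 + (1/2) ^ (?N + 1)" for k
  proof (cases "?m k > 0")
    case True
    then have "(1/2::real) ^ shannon_length V Q c k \<le> ?m k / 2"
      using ceiling_neg_log_bounds(1)[OF True colour_mass_bounds(2)[OF Q]] by (simp add: shannon_length_def)
    moreover have "(0::real) \<le> (1/2) ^ (?N + 1)"
      by simp
    ultimately show ?thesis
      by linarith
  qed (simp add: shannon_length_def colour_mass_eq_0[OF Q])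
  then have "(\<Sum>k\<in>c ` V. (1/2::real) ^ shannon_length V Q c k) \<le> (\<Sum>k\<in>c ` V. ?m k / 2 + (1/2) ^ (?N + 1))"
    by (rule sum_mono)
  also have "\<dots> = (\<Sum>k\<in>c ` V. ?m k) / 2 + ?N * (1/2) ^ (?N + 1)"
    by (simp add: sum.distrib sum_divide_distrib)
  also have "\<dots> = 1/2 + ?N / 2 ^ (?N + 1)"
    using sum_colour_mass[OF Q] by (simp add: power_one_over)
  also have "\<dots> \<le> 1"
    using of_nat_less_two_power[of ?N] by (simp add: divide_simps)
  finally show ?thesis .
qed

lemma expected_shannon_length_le:
  assumes Q: "finite_distribution V Q"
  shows "(\<Sum>v\<in>V. Q v * real (shannon_length V Q c (c v))) \<le> entropy_of_map V Q c + 2"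
proof -
  let ?m = "colour_mass V Q c"
  have "?m k * real (shannon_length V Q c k) \<le> - (?m k * log 2 (?m k)) + 2 * ?m k" for k
  proof (cases "?m k > 0")
    case True
    have "real (shannon_length V Q c k) \<le> - log 2 (?m k) + 2"
      using ceiling_neg_log_bounds(2)[OF True colour_mass_bounds(2)[OF Q]] True
      by (simp add: shannon_length_def)
    then have "?m k * real (shannon_length V Q c k) \<le> ?m k * (- log 2 (?m k) + 2)"
      using True by (intro mult_left_mono) auto
    then show ?thesis
      by (simp add: algebra_simps)
  qed (simp add: colour_mass_eq_0[OF Q])
  then have "(\<Sum>k\<in>c ` V. ?m k * real (shannon_length V Q c k))
      \<le> (\<Sum>k\<in>c ` V. - (?m k * log 2 (?m k)) + 2 * ?m k)"
    by (rule sum_mono)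
  also have "\<dots> = entropy_of_map V Q c + 2"
    using sum_colour_mass[OF Q, of c]
    by (simp add: sum.distrib entropy_of_map_colour_mass sum_negf sum_subtractf sum_distrib_left[symmetric])
  finally show ?thesis
    using Q sum_colour_mass_mult[of V Q "\<lambda>k. real (shannon_length V Q c k)" c]
    by (simp add: finite_distribution_def)
qed

lemma entropy_of_map_cong:
  assumes "\<And>v. v \<in> V \<Longrightarrow> Q v = Q' v" "\<And>v. v \<in> V \<Longrightarrow> c v = c' v"
  shows "entropy_of_map V Q c = entropy_of_map V Q' c'"
proof -
  have "colour_mass V Q c k = colour_mass V Q' c' k" for k
    unfolding colour_mass_def using assms by (intro sum.cong) auto
  moreover have "c ` V = c' ` V"
    using assms(2) by (rule image_cong[OF refl])
  ultimately show ?thesis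
    unfolding entropy_of_map_colour_mass by simp
qed

lemma entropy_of_map_reindex:
  assumes "inj_on h W"
  shows "entropy_of_map (h ` W) Q c = entropy_of_map W (Q \<circ> h) (c \<circ> h)"
proof -
  have "colour_mass (h ` W) Q c k = colour_mass W (Q \<circ> h) (c \<circ> h) k" for k
  proof -
    have "{v \<in> h ` W. c v = k} = h ` {w \<in> W. c (h w) = k}"
      by auto
    moreover have "inj_on h {w \<in> W. c (h w) = k}"
      using assms by (rule inj_on_subset) auto
    ultimately show ?thesis
      unfolding colour_mass_def by (simp add: sum.reindex)
  qed
  then show ?thesis
    unfolding entropy_of_map_colour_mass by (simp add: image_comp)
qed

lemma mult_log_mult:
  fixes a b :: real
  assumes "a \<ge> 0" "b \<ge> 0"
  shows "(a * b) * log 2 (a * b) = (a * log 2 a) * b + a * (b * log 2 b)"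
  using assms by (cases "a = 0 \<or> b = 0") (auto simp: log_mult algebra_simps)

lemma sum_product_fst_snd:
  fixes F G :: "'a \<Rightarrow> 'b::comm_semiring_0"
  shows "(\<Sum>p\<in>A \<times> B. F (fst p) * G (snd p)) = (\<Sum>a\<in>A. F a) * (\<Sum>b\<in>B. G b)"
  by (simp add: sum_product sum.cartesian_product case_prod_beta)

lemma entropy_of_map_product:
  assumes Q1: "finite_distribution V1 Q1" and Q2: "finite_distribution V2 Q2"
  shows "entropy_of_map (V1 \<times> V2) (\<lambda>p. Q1 (fst p) * Q2 (snd p)) (\<lambda>p. to_nat (c1 (fst p), c2 (snd p)))
       = entropy_of_map V1 Q1 c1 + entropy_of_map V2 Q2 c2"
proof -
  let ?Q = "\<lambda>p. Q1 (fst p) * Q2 (snd p)" and ?c = "\<lambda>p. to_nat (c1 (fst p), c2 (snd p))"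
  let ?m1 = "colour_mass V1 Q1 c1" and ?m2 = "colour_mass V2 Q2 c2"
  let ?m = "colour_mass (V1 \<times> V2) ?Q ?c"
  have m: "?m (to_nat k) = ?m1 (fst k) * ?m2 (snd k)" for k
  proof -
    have "{p \<in> V1 \<times> V2. ?c p = to_nat k} = {a \<in> V1. c1 a = fst k} \<times> {b \<in> V2. c2 b = snd k}"
      by auto
    then show ?thesis
      unfolding colour_mass_def by (simp add: sum_product sum.cartesian_product case_prod_beta)
  qed
  have "?c ` (V1 \<times> V2) = to_nat ` (c1 ` V1 \<times> c2 ` V2)"
    by force
  then have "(\<Sum>k\<in>?c ` (V1 \<times> V2). ?m k * log 2 (?m k))
      = (\<Sum>k\<in>c1 ` V1 \<times> c2 ` V2. ?m1 (fst k) * ?m2 (snd k) * log 2 (?m1 (fst k) * ?m2 (snd k)))"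
    by (simp add: sum.reindex m)
  also have "\<dots> = (\<Sum>k\<in>c1 ` V1 \<times> c2 ` V2. (?m1 (fst k) * log 2 (?m1 (fst k))) * ?m2 (snd k))
                 + (\<Sum>k\<in>c1 ` V1 \<times> c2 ` V2. ?m1 (fst k) * (?m2 (snd k) * log 2 (?m2 (snd k))))"
    by (simp add: mult_log_mult colour_mass_bounds Q1 Q2 sum.distrib)
  also have "\<dots> = (\<Sum>k\<in>c1 ` V1. ?m1 k * log 2 (?m1 k)) + (\<Sum>k\<in>c2 ` V2. ?m2 k * log 2 (?m2 k))"
    using sum_product_fst_snd[of "\<lambda>k. ?m1 k * log 2 (?m1 k)" ?m2 "c1 ` V1" "c2 ` V2"]
      sum_product_fst_snd[of ?m1 "\<lambda>k. ?m2 k * log 2 (?m2 k)" "c1 ` V1" "c2 ` V2"]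
    by (simp add: sum_colour_mass Q1 Q2)
  finally show ?thesis
    unfolding entropy_of_map_colour_mass by simp
qed

lemma exists_coloring:
  assumes "finite V" "\<And>v. v \<in> V \<Longrightarrow> \<not> E v v"
  shows "\<exists>c. is_coloring V E c"
proof -
  obtain c :: "'a \<Rightarrow> nat" where "inj_on c V"
    using finite_imp_inj_to_nat_seg[OF assms(1)] by blast
  then have "is_coloring V E c"
    using assms(2) by (auto simp: is_coloring_def inj_on_def)
  then show ?thesis
    by blast
qed

lemma chromatic_entropy_le:
  assumes "finite_distribution V Q" "is_coloring V E c"
  shows "chromatic_entropy V E Q \<le> entropy_of_map V Q c"
  unfolding chromatic_entropy_def using assms
  by (intro cInf_lower) (auto intro!: bdd_belowI[of _ 0] entropy_of_map_nonneg)

lemma chromatic_entropy_nonneg: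
  assumes "finite_distribution V Q" "\<And>v. v \<in> V \<Longrightarrow> \<not> E v v"
  shows "0 \<le> chromatic_entropy V E Q"
  unfolding chromatic_entropy_def using assms exists_coloring[of V E]
  by (intro cInf_greatest) (auto simp: finite_distribution_def entropy_of_map_nonneg)

lemma chromatic_entropy_approx:
  assumes "finite_distribution V Q" "\<And>v. v \<in> V \<Longrightarrow> \<not> E v v" "e > 0"
  obtains c where "is_coloring V E c" "entropy_of_map V Q c < chromatic_entropy V E Q + e"
proof -
  have "{entropy_of_map V Q c | c. is_coloring V E c} \<noteq> {}"
    using assms(1,2) exists_coloring[of V E] by (auto simp: finite_distribution_def)
  from cInf_lessD[OF this, of "chromatic_entropy V E Q + e"] show ?thesis
    using assms(3) that unfolding chromatic_entropy_def by auto
qed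

section \<open>Prefix-free codes and Kraft's inequality\<close>

lemma prefix_free_iff: "prefix_free S \<longleftrightarrow> (\<forall>w\<in>S. \<forall>w'\<in>S. w \<noteq> w' \<longrightarrow> \<not> prefix w w')"
  by (simp add: prefix_free_def prefix_def)

lemma card_extensions:
  assumes "length u \<le> L"
  shows "real (card {w :: bool list. length w = L \<and> prefix u w}) = 2 ^ L * (1/2) ^ length u"
proof -
  have "{w. length w = L \<and> prefix u w} = (\<lambda>v. u @ v) ` lists_of_length (L - length u)"
    using assms by (auto simp: prefix_def)
  then have "card {w :: bool list. length w = L \<and> prefix u w} = 2 ^ (L - length u)"
    by (simp add: card_image inj_on_def card_lists_of_length)
  moreover have "(2::real) ^ L = 2 ^ (L - length u) * 2 ^ length u"
    using assms by (simp flip: power_add)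
  ultimately show ?thesis
    by (simp add: power_one_over)
qed

text \<open>Count the extensions of the codewords to a common length \<open>L\<close>: prefix-freeness makes these
  sets of extensions disjoint.\<close>

lemma kraft_inequality:
  assumes "finite S" "prefix_free S"
  shows "(\<Sum>w\<in>S. (1/2::real) ^ length w) \<le> 1"
proof -
  define L where "L = Max (length ` S)"
  have len: "length w \<le> L" if "w \<in> S" for w
    using assms(1) that by (simp add: L_def)
  let ?ext = "\<lambda>u. {w :: bool list. length w = L \<and> prefix u w}"
  have "?ext u \<inter> ?ext u' = {}" if "u \<in> S" "u' \<in> S" "u \<noteq> u'" for u u'
  proof (rule ccontr)
    assume "?ext u \<inter> ?ext u' \<noteq> {}"
    then obtain w where "prefix u w" "prefix u' w"
      by blast
    then have "prefix u u' \<or> prefix u' u"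
      by (rule prefix_same_cases)
    moreover have "\<not> prefix u u'" "\<not> prefix u' u"
      using assms(2) that by (simp_all add: prefix_free_iff)
    ultimately show False
      by simp
  qed
  then have "card (\<Union>w\<in>S. ?ext w) = (\<Sum>w\<in>S. card (?ext w))"
    using assms(1) by (intro card_UN_disjoint) (auto intro: finite_subset[OF _ finite_lists_of_length[of L]])
  moreover have "card (\<Union>w\<in>S. ?ext w) \<le> card (lists_of_length L :: bool list set)"
    by (intro card_mono) auto
  ultimately have "(\<Sum>w\<in>S. real (card (?ext w))) \<le> 2 ^ L"
    unfolding card_lists_of_length by (simp flip: of_nat_sum)
  moreover have "(\<Sum>w\<in>S. real (card (?ext w))) = 2 ^ L * (\<Sum>w\<in>S. (1/2) ^ length w)"
    unfolding sum_distrib_left by (intro sum.cong refl) (simp only: card_extensions len)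
  ultimately show ?thesis
    by simp
qed

definition prefix_free_on :: "'k set \<Rightarrow> ('k \<Rightarrow> bool list) \<Rightarrow> bool" where
  "prefix_free_on K cw \<longleftrightarrow> (\<forall>k\<in>K. \<forall>k'\<in>K. k \<noteq> k' \<longrightarrow> \<not> prefix (cw k) (cw k'))"

lemma prefix_free_on_inj_on: "prefix_free_on K cw \<Longrightarrow> inj_on cw K"
  unfolding prefix_free_on_def inj_on_def by (metis prefix_order.order_refl)

lemma prefix_free_image: "prefix_free_on K cw \<Longrightarrow> prefix_free (cw ` K)"
  unfolding prefix_free_on_def prefix_free_iff by fastforce

lemma exists_word_avoiding_prefixes:
  fixes cw :: "'k \<Rightarrow> bool list"
  assumes "finite K" "\<And>k. k \<in> K \<Longrightarrow> length (cw k) \<le> L"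
    and "(\<Sum>k\<in>K. (1/2::real) ^ length (cw k)) + (1/2) ^ L \<le> 1"
  obtains w where "length w = L" "\<And>k. k \<in> K \<Longrightarrow> \<not> prefix (cw k) w"
proof -
  let ?ext = "\<lambda>u. {w :: bool list. length w = L \<and> prefix u w}"
  have "real (card (\<Union>k\<in>K. ?ext (cw k))) \<le> (\<Sum>k\<in>K. real (card (?ext (cw k))))"
    using card_UN_le[OF assms(1), of "\<lambda>k. ?ext (cw k)"] by (simp flip: of_nat_sum)
  also have "\<dots> = (\<Sum>k\<in>K. 2 ^ L * (1/2) ^ length (cw k))"
    by (intro sum.cong refl) (simp only: card_extensions assms(2))
  also have "\<dots> = 2 ^ L * (\<Sum>k\<in>K. (1/2) ^ length (cw k))"
    by (simp add: sum_distrib_left)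
  also have "\<dots> \<le> 2 ^ L * (1 - (1/2) ^ L)"
    using assms(3) by (intro mult_left_mono) auto
  also have "\<dots> < card (lists_of_length L :: bool list set)"
    by (simp add: card_lists_of_length algebra_simps power_one_over)
  finally have less: "card (\<Union>k\<in>K. ?ext (cw k)) < card (lists_of_length L :: bool list set)"
    by (simp only: of_nat_less_iff)
  have "\<not> lists_of_length L \<subseteq> (\<Union>k\<in>K. ?ext (cw k))"
  proof
    assume covered: "lists_of_length L \<subseteq> (\<Union>k\<in>K. ?ext (cw k))"
    have "finite (\<Union>k\<in>K. ?ext (cw k))"
      by (rule finite_subset[OF _ finite_lists_of_length[of L]]) auto
    from card_mono[OF this covered] less show False
      by simp
  qed
  then show ?thesis
    using that by blast
qed

lemma prefix_free_on_insert:
  assumes "prefix_free_on K cw" "x \<notin> K" "\<And>k. k \<in> K \<Longrightarrow> length (cw k) \<le> length w"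
    and "\<And>k. k \<in> K \<Longrightarrow> \<not> prefix (cw k) w"
  shows "prefix_free_on (insert x K) (cw(x := w))"
proof -
  have "\<not> prefix w (cw k)" if "k \<in> K" for k
  proof
    assume "prefix w (cw k)"
    with assms(3)[OF that] have "cw k = w"
      by (auto simp: prefix_def)
    with assms(4)[OF that] show False
      by simp
  qed
  then show ?thesis
    using assms(1,2,4) unfolding prefix_free_on_def by auto
qed

text \<open>Codewords are chosen greedily, in order of increasing length.\<close>

lemma kraft_converse:
  assumes "finite K" "(\<Sum>k\<in>K. (1/2::real) ^ l k) \<le> 1"
  obtains cw where "prefix_free_on K cw" "\<And>k. k \<in> K \<Longrightarrow> length (cw k) = l k"
proof -
  have "\<exists>cw. prefix_free_on K cw \<and> (\<forall>k\<in>K. length (cw k) = l k)"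
    using assms
  proof (induction K rule: finite_ranking_induct[where f = l])
    case empty
    then show ?case
      by (simp add: prefix_free_on_def)
  next
    case (insert x K)
    show ?case
    proof (cases "x \<in> K")
      case True
      then show ?thesis
        using insert by (simp add: insert_absorb)
    next
      case False
      have sum_K: "(\<Sum>k\<in>K. (1/2::real) ^ l k) + (1/2) ^ l x \<le> 1"
        using insert.prems insert.hyps(1) False by simp
      moreover have "(0::real) \<le> (1/2) ^ l x"
        by simp
      ultimately have "(\<Sum>k\<in>K. (1/2::real) ^ l k) \<le> 1"
        by linarith
      then obtain cw where cw: "prefix_free_on K cw" "\<forall>k\<in>K. length (cw k) = l k"
        using insert.IH by blast
      obtain w where w: "length w = l x" "\<And>k. k \<in> K \<Longrightarrow> \<not> prefix (cw k) w"
        using exists_word_avoiding_prefixes[of K cw "l x"] insert.hyps cw(2) sum_K by auto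
      have "prefix_free_on (insert x K) (cw(x := w))"
        using prefix_free_on_insert[OF cw(1) False] w cw(2) insert.hyps(2) by simp
      moreover have "\<forall>k\<in>insert x K. length ((cw(x := w)) k) = l k"
        using cw(2) w(1) by auto
      ultimately show ?thesis
        by blast
    qed
  qed
  then obtain cw where "prefix_free_on K cw" "\<forall>k\<in>K. length (cw k) = l k"
    by blast
  then show ?thesis
    by (intro that) auto
qed

section \<open>The characteristic graph\<close>

lemma char_vertices_eq: "char_vertices n = lists_of_length n \<times> lists_of_length n"
  by (auto simp: char_vertices_def)

lemma finite_char_vertices [simp]: "finite (char_vertices n :: ('x::finite list \<times> 'z::finite list) set)"
  by (simp add: char_vertices_eq)

lemma sum_Pn_eq_sum_char_dist:
  fixes P :: "'x::finite \<Rightarrow> 'y::finite \<Rightarrow> real" and g :: "'y \<Rightarrow> 'z::finite"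
  shows "(\<Sum>xs\<in>lists_of_length n. \<Sum>ys\<in>lists_of_length n. Pn P n xs ys * h xs (map g ys))
       = (\<Sum>v\<in>char_vertices n. char_dist P g n v * h (fst v) (snd v))"
proof -
  have "(\<Sum>v\<in>char_vertices n. char_dist P g n v * h (fst v) (snd v))
      = (\<Sum>xs\<in>lists_of_length n. \<Sum>zs\<in>lists_of_length n.
           \<Sum>ys\<in>{ys \<in> lists_of_length n. map g ys = zs}. Pn P n xs ys * h xs (map g ys))"
    unfolding char_vertices_eq sum.cartesian_product char_dist_def
    by (intro sum.cong refl) (auto simp: sum_distrib_right)
  also have "\<dots> = (\<Sum>xs\<in>lists_of_length n. \<Sum>ys\<in>lists_of_length n. Pn P n xs ys * h xs (map g ys))"
    by (intro sum.cong refl sum.group) auto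
  finally show ?thesis
    by simp
qed

lemma finite_distribution_char_dist:
  fixes P :: "'x::finite \<Rightarrow> 'y::finite \<Rightarrow> real" and g :: "'y \<Rightarrow> 'z::finite"
  assumes "is_joint_dist P"
  shows "finite_distribution (char_vertices n) (char_dist P g n)"
proof -
  have "(\<Sum>v\<in>char_vertices n. char_dist P g n v) = 1"
    using sum_Pn_eq_sum_char_dist[where n = n and P = P and h = "\<lambda>_ _. 1" and g = g] sum_Pn[of P n] assms
    by (simp add: is_joint_dist_def)
  moreover have "char_dist P g n v \<ge> 0" for v
    unfolding char_dist_def by (intro sum_nonneg Pn_nonneg[OF assms])
  ultimately show ?thesis
    by (simp add: finite_distribution_def char_vertices_eq)
qed

lemma char_dist_append:
  fixes P :: "'x::finite \<Rightarrow> 'y::finite \<Rightarrow> real" and g :: "'y \<Rightarrow> 'z::finite"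
  assumes "length xs = m" "length zs = m" "length zs' = n"
  shows "char_dist P g (m + n) (xs @ xs', zs @ zs') = char_dist P g m (xs, zs) * char_dist P g n (xs', zs')"
proof -
  have char_dist_if: "char_dist P g k (xs, zs) = (\<Sum>ys\<in>lists_of_length k. if map g ys = zs then Pn P k xs ys else 0)"
    for k and xs :: "'x list" and zs
    unfolding char_dist_def by (simp add: sum.inter_filter[symmetric] conj_commute)
  show ?thesis
    unfolding char_dist_if sum_lists_of_length_add sum_product
    using assms by (intro sum.cong refl) (auto simp: Pn_append)
qed

lemma char_adj_irrefl: "\<not> char_adj P f g n v v"
  by (auto simp: char_adj_def)

lemma char_adj_witness:
  assumes P: "is_joint_dist P"
    and v: "v \<in> char_vertices n" "v' \<in> char_vertices n"
    and adj: "char_adj P f g n v v'"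
  obtains ys where "length ys = n" "map g ys = snd v" "snd v' = snd v"
    "Pn P n (fst v) ys > 0" "Pn P n (fst v') ys > 0" "map2 f (fst v) ys \<noteq> map2 f (fst v') ys"
proof -
  from adj obtain ys t where ys: "snd v = snd v'" "length ys = n"
    "\<forall>t<n. g (ys ! t) = snd v ! t"
    "\<forall>t<n. P (fst v ! t) (ys ! t) * P (fst v' ! t) (ys ! t) > 0"
    and t: "t < n" "f (fst v ! t) (ys ! t) \<noteq> f (fst v' ! t) (ys ! t)"
    unfolding char_adj_def by blast
  have lens: "length (fst v) = n" "length (fst v') = n" "length (snd v) = n"
    using v by (auto simp: char_vertices_def)
  have "P x y \<ge> 0" for x y
    using P by (simp add: is_joint_dist_def)
  then have "P (fst v ! t) (ys ! t) > 0 \<and> P (fst v' ! t) (ys ! t) > 0" if "t < n" for t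
    using ys(4) that by (auto simp: zero_less_mult_iff not_less[symmetric])
  then have "Pn P n (fst v) ys > 0" "Pn P n (fst v') ys > 0"
    by (simp_all add: Pn_pos_iff[OF P])
  moreover have "map g ys = snd v"
    using ys(2,3) lens by (intro nth_equalityI) auto
  moreover have "map2 f (fst v) ys ! t \<noteq> map2 f (fst v') ys ! t"
    using t lens ys(2) by simp
  ultimately show ?thesis
    using that ys(1,2) by metis
qed

definition append_vertices :: "('x list \<times> 'z list) \<times> ('x list \<times> 'z list) \<Rightarrow> 'x list \<times> 'z list" where
  "append_vertices p = (fst (fst p) @ fst (snd p), snd (fst p) @ snd (snd p))"

lemma char_vertices_add: "char_vertices (m + n) = append_vertices ` (char_vertices m \<times> char_vertices n)"
proof (intro set_eqI iffI)
  fix v :: "'x list \<times> 'z list" assume "v \<in> char_vertices (m + n)"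
  then show "v \<in> append_vertices ` (char_vertices m \<times> char_vertices n)"
    by (intro image_eqI[of _ _ "(map_prod (take m) (take m) v, map_prod (drop m) (drop m) v)"])
       (auto simp: append_vertices_def char_vertices_def)
qed (auto simp: append_vertices_def char_vertices_def)

lemma inj_on_append_vertices: "inj_on append_vertices (char_vertices m \<times> char_vertices n)"
  by (auto simp: inj_on_def append_vertices_def char_vertices_def)

lemma char_dist_append_vertices:
  fixes P :: "'x::finite \<Rightarrow> 'y::finite \<Rightarrow> real" and g :: "'y \<Rightarrow> 'z::finite"
  assumes "p \<in> char_vertices m \<times> char_vertices n"
  shows "char_dist P g (m + n) (append_vertices p) = char_dist P g m (fst p) * char_dist P g n (snd p)"
  using assms char_dist_append[of "fst (fst p)" m "snd (fst p)" "snd (snd p)" n P g "fst (snd p)"]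
  by (auto simp: append_vertices_def char_vertices_def)

lemma char_adj_append_vertices:
  assumes "p \<in> char_vertices m \<times> char_vertices n" "p' \<in> char_vertices m \<times> char_vertices n"
    and "char_adj P f g (m + n) (append_vertices p) (append_vertices p')"
  shows "char_adj P f g m (fst p) (fst p') \<or> char_adj P f g n (snd p) (snd p')"
proof -
  obtain xs1 zs1 xs2 zs2 xs1' zs1' xs2' zs2' where
    p: "p = ((xs1, zs1), (xs2, zs2))" "p' = ((xs1', zs1'), (xs2', zs2'))"
    by (metis prod.collapse)
  have lens: "length xs1 = m" "length zs1 = m" "length xs1' = m" "length zs1' = m"
    "length xs2 = n" "length zs2 = n" "length xs2' = n"
    using assms(1,2) by (auto simp: p char_vertices_def)
  from assms(3) obtain ys t where
    zs: "zs1 @ zs2 = zs1' @ zs2'" and ys: "length ys = m + n"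
    "\<forall>t<m + n. g (ys ! t) = (zs1 @ zs2) ! t"
    "\<forall>t<m + n. P ((xs1 @ xs2) ! t) (ys ! t) * P ((xs1' @ xs2') ! t) (ys ! t) > 0"
    and t: "t < m + n" "f ((xs1 @ xs2) ! t) (ys ! t) \<noteq> f ((xs1' @ xs2') ! t) (ys ! t)"
    unfolding char_adj_def p append_vertices_def by auto
  have "zs1 = zs1'" "zs2 = zs2'"
    using zs lens by auto
  have first: "g (ys ! i) = zs1 ! i" "P (xs1 ! i) (ys ! i) * P (xs1' ! i) (ys ! i) > 0" if "i < m" for i
    using ys(2,3)[rule_format, of i] that lens by (simp_all add: nth_append)
  have last: "g (ys ! (m + i)) = zs2 ! i" "P (xs2 ! i) (ys ! (m + i)) * P (xs2' ! i) (ys ! (m + i)) > 0"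
    if "i < n" for i
    using ys(2,3)[rule_format, of "m + i"] that lens by (simp_all add: nth_append)
  show ?thesis
  proof (cases "t < m")
    case True
    then have "char_adj P f g m (xs1, zs1) (xs1', zs1')"
      unfolding char_adj_def using \<open>zs1 = zs1'\<close> ys(1) t(2) lens first
      by (intro conjI exI[of _ "take m ys"] exI[of _ t]) (auto simp: nth_append)
    then show ?thesis
      by (simp add: p)
  next
    case False
    then have "char_adj P f g n (xs2, zs2) (xs2', zs2')"
      unfolding char_adj_def using \<open>zs2 = zs2'\<close> ys(1) t lens last
      by (intro conjI exI[of _ "drop m ys"] exI[of _ "t - m"]) (auto simp: nth_append)
    then show ?thesis
      by (simp add: p)
  qed
qed

abbreviation char_chromatic_entropy ::
  "('x::finite \<Rightarrow> 'y::finite \<Rightarrow> real) \<Rightarrow> ('x \<Rightarrow> 'y \<Rightarrow> 'u) \<Rightarrow> ('y \<Rightarrow> 'z::finite) \<Rightarrow> nat \<Rightarrow> real" where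
  "char_chromatic_entropy P f g n \<equiv> chromatic_entropy (char_vertices n) (char_adj P f g n) (char_dist P g n)"

lemma char_chromatic_entropy_nonneg:
  "is_joint_dist P \<Longrightarrow> 0 \<le> char_chromatic_entropy P f g n"
  by (intro chromatic_entropy_nonneg finite_distribution_char_dist char_adj_irrefl)

lemma char_chromatic_entropy_approx:
  fixes P :: "'x::finite \<Rightarrow> 'y::finite \<Rightarrow> real" and g :: "'y \<Rightarrow> 'z::finite"
  assumes "is_joint_dist P" "e > 0"
  obtains c where "is_coloring (char_vertices n) (char_adj P f g n) c"
    "entropy_of_map (char_vertices n) (char_dist P g n) c < char_chromatic_entropy P f g n + e"
  using chromatic_entropy_approx[OF finite_distribution_char_dist[OF assms(1)] char_adj_irrefl assms(2)] .

definition split_coloring :: "nat \<Rightarrow> ('x list \<times> 'z list \<Rightarrow> nat) \<Rightarrow> ('x list \<times> 'z list \<Rightarrow> nat)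
    \<Rightarrow> 'x list \<times> 'z list \<Rightarrow> nat" where
  "split_coloring m c1 c2 v = to_nat (c1 (map_prod (take m) (take m) v), c2 (map_prod (drop m) (drop m) v))"

lemma split_coloring_append_vertices:
  "p \<in> char_vertices m \<times> char_vertices n \<Longrightarrow>
    split_coloring m c1 c2 (append_vertices p) = to_nat (c1 (fst p), c2 (snd p))"
  by (auto simp: split_coloring_def append_vertices_def char_vertices_def)

lemma is_coloring_split_coloring:
  assumes c1: "is_coloring (char_vertices m) (char_adj P f g m) c1"
    and c2: "is_coloring (char_vertices n) (char_adj P f g n) c2"
  shows "is_coloring (char_vertices (m + n)) (char_adj P f g (m + n)) (split_coloring m c1 c2)"
  unfolding is_coloring_def char_vertices_add
proof (intro ballI impI notI)
  fix v v' assume v: "v \<in> append_vertices ` (char_vertices m \<times> char_vertices n)"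
    "v' \<in> append_vertices ` (char_vertices m \<times> char_vertices n)"
    and same: "split_coloring m c1 c2 v = split_coloring m c1 c2 v'"
    and adj: "char_adj P f g (m + n) v v'"
  then obtain p p' where p: "p \<in> char_vertices m \<times> char_vertices n" "p' \<in> char_vertices m \<times> char_vertices n"
    "v = append_vertices p" "v' = append_vertices p'"
    by blast
  then have "c1 (fst p) = c1 (fst p')" "c2 (snd p) = c2 (snd p')"
    using same by (simp_all add: split_coloring_append_vertices)
  moreover have "char_adj P f g m (fst p) (fst p') \<or> char_adj P f g n (snd p) (snd p')"
    using char_adj_append_vertices[OF p(1,2)] adj p(3,4) by blast
  ultimately show False
    using p(1,2) c1 c2 unfolding is_coloring_def by auto
qed

lemma entropy_of_map_split_coloring:
  fixes P :: "'x::finite \<Rightarrow> 'y::finite \<Rightarrow> real" and g :: "'y \<Rightarrow> 'z::finite"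
  assumes P: "is_joint_dist P"
  shows "entropy_of_map (char_vertices (m + n)) (char_dist P g (m + n)) (split_coloring m c1 c2)
       = entropy_of_map (char_vertices m) (char_dist P g m) c1 + entropy_of_map (char_vertices n) (char_dist P g n) c2"
proof -
  let ?W = "char_vertices m \<times> char_vertices n :: (('x list \<times> 'z list) \<times> ('x list \<times> 'z list)) set"
  have "entropy_of_map (char_vertices (m + n)) (char_dist P g (m + n)) (split_coloring m c1 c2)
      = entropy_of_map ?W (char_dist P g (m + n) \<circ> append_vertices) (split_coloring m c1 c2 \<circ> append_vertices)"
    unfolding char_vertices_add by (rule entropy_of_map_reindex[OF inj_on_append_vertices])
  also have "\<dots> = entropy_of_map ?W (\<lambda>p. char_dist P g m (fst p) * char_dist P g n (snd p))
                    (\<lambda>p. to_nat (c1 (fst p), c2 (snd p)))"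
    by (rule entropy_of_map_cong) (simp_all add: split_coloring_append_vertices char_dist_append_vertices)
  also have "\<dots> = entropy_of_map (char_vertices m) (char_dist P g m) c1
                  + entropy_of_map (char_vertices n) (char_dist P g n) c2"
    by (intro entropy_of_map_product finite_distribution_char_dist P)
  finally show ?thesis .
qed

lemma char_chromatic_entropy_subadditive:
  fixes P :: "'x::finite \<Rightarrow> 'y::finite \<Rightarrow> real" and g :: "'y \<Rightarrow> 'z::finite"
  assumes P: "is_joint_dist P"
  shows "char_chromatic_entropy P f g (m + n) \<le> char_chromatic_entropy P f g m + char_chromatic_entropy P f g n"
proof (rule field_le_epsilon)
  fix e :: real
  assume "e > 0"
  then obtain c1 c2 where c1: "is_coloring (char_vertices m) (char_adj P f g m) c1"
    "entropy_of_map (char_vertices m) (char_dist P g m) c1 < char_chromatic_entropy P f g m + e / 2"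
    and c2: "is_coloring (char_vertices n) (char_adj P f g n) c2"
    "entropy_of_map (char_vertices n) (char_dist P g n) c2 < char_chromatic_entropy P f g n + e / 2"
    using char_chromatic_entropy_approx[OF P, where e = "e / 2"] by (metis half_gt_zero)
  have "char_chromatic_entropy P f g (m + n)
      \<le> entropy_of_map (char_vertices (m + n)) (char_dist P g (m + n)) (split_coloring m c1 c2)"
    by (intro chromatic_entropy_le finite_distribution_char_dist P is_coloring_split_coloring c1(1) c2(1))
  then show "char_chromatic_entropy P f g (m + n)
      \<le> char_chromatic_entropy P f g m + char_chromatic_entropy P f g n + e"
    using c1(2) c2(2) by (simp add: entropy_of_map_split_coloring[OF P])
qed

section \<open>Zero-error codes and colourings\<close>

lemma char_adj_if_map2_ne:
  assumes P: "is_joint_dist P"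
    and "length xs = n" "length xs' = n" "length ys = n"
    and "Pn P n xs ys > 0" "Pn P n xs' ys > 0" "map2 f xs ys \<noteq> map2 f xs' ys"
  shows "char_adj P f g n (xs, map g ys) (xs', map g ys)"
proof -
  obtain t where "t < n" "map2 f xs ys ! t \<noteq> map2 f xs' ys ! t"
    using assms(2-4,7) nth_equalityI[of "map2 f xs ys" "map2 f xs' ys"] by auto
  then have "t < n" "f (xs ! t) (ys ! t) \<noteq> f (xs' ! t) (ys ! t)"
    using assms(2-4) by simp_all
  then show ?thesis
    using assms(4-6) unfolding char_adj_def by (auto simp: Pn_pos_iff[OF P])
qed

lemma zero_error_code_coloring:
  assumes P: "is_joint_dist P" and code: "zero_error_code P f g n R enc dec"
  shows "is_coloring (char_vertices n) (char_adj P f g n) (\<lambda>v. to_nat (enc (fst v) (snd v)))"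
  unfolding is_coloring_def
proof (intro ballI impI notI)
  fix v v' assume v: "v \<in> char_vertices n" "v' \<in> char_vertices n"
    and same_word: "to_nat (enc (fst v) (snd v)) = to_nat (enc (fst v') (snd v'))"
    and "char_adj P f g n v v'"
  then obtain ys where ys: "length ys = n" "map g ys = snd v" "snd v' = snd v"
    "Pn P n (fst v) ys > 0" "Pn P n (fst v') ys > 0" "map2 f (fst v) ys \<noteq> map2 f (fst v') ys"
    using char_adj_witness[OF P] by blast
  have "length (fst v) = n" "length (fst v') = n"
    using v by (auto simp: char_vertices_def)
  then have "map2 f (fst v) ys = dec ys (enc (fst v) (map g ys))"
    "map2 f (fst v') ys = dec ys (enc (fst v') (map g ys))"
    using code ys(1,4,5) by (simp_all add: zero_error_code_def)
  then show False
    using same_word ys(2,3,6) by simp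
qed

lemma char_chromatic_entropy_le_code_rate:
  fixes P :: "'x::finite \<Rightarrow> 'y::finite \<Rightarrow> real" and g :: "'y \<Rightarrow> 'z::finite"
  assumes P: "is_joint_dist P" and "n > 0" and code: "zero_error_code P f g n R enc dec"
  shows "char_chromatic_entropy P f g n \<le> real n * R"
proof -
  let ?V = "char_vertices n :: ('x list \<times> 'z list) set"
  define c where "c v = to_nat (enc (fst v) (snd v))" for v :: "'x list \<times> 'z list"
  have "prefix_free ((\<lambda>v. enc (fst v) (snd v)) ` ?V)"
    using code by (simp add: zero_error_code_def char_vertices_def case_prod_beta)
  then have "(\<Sum>w\<in>(\<lambda>v. enc (fst v) (snd v)) ` ?V. (1/2::real) ^ length w) \<le> 1"
    by (intro kraft_inequality) simp_all
  moreover have "c ` ?V = to_nat ` (\<lambda>v. enc (fst v) (snd v)) ` ?V"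
    by (simp add: c_def image_image)
  ultimately have kraft: "(\<Sum>k\<in>c ` ?V. (1/2::real) ^ length (from_nat k :: bool list)) \<le> 1"
    by (simp add: sum.reindex)
  have "char_chromatic_entropy P f g n \<le> entropy_of_map ?V (char_dist P g n) c"
    unfolding c_def by (intro chromatic_entropy_le finite_distribution_char_dist P zero_error_code_coloring[OF P code])
  also have "\<dots> \<le> (\<Sum>v\<in>?V. char_dist P g n v * real (length (from_nat (c v) :: bool list)))"
    by (rule entropy_of_map_le_expected_length[OF finite_distribution_char_dist[OF P] kraft])
  also have "\<dots> = (\<Sum>xs\<in>lists_of_length n. \<Sum>ys\<in>lists_of_length n. Pn P n xs ys * real (length (enc xs (map g ys))))"
    using sum_Pn_eq_sum_char_dist[where h = "\<lambda>xs zs. real (length (enc xs zs))" and P = P and g = g]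
    by (simp add: c_def)
  also have "\<dots> = real n * R"
    using code \<open>n > 0\<close> by (simp add: zero_error_code_def)
  finally show ?thesis .
qed

lemma zero_error_code_from_coloring:
  fixes P :: "'x::finite \<Rightarrow> 'y::finite \<Rightarrow> real" and g :: "'y \<Rightarrow> 'z::finite"
  assumes P: "is_joint_dist P"
    and col: "is_coloring (char_vertices n) (char_adj P f g n) c"
    and cw: "prefix_free_on (c ` char_vertices n) cw"
  defines "R \<equiv> (\<Sum>v\<in>char_vertices n. char_dist P g n v * real (length (cw (c v)))) / real n"
  shows "\<exists>dec. zero_error_code P f g n R (\<lambda>xs zs. cw (c (xs, zs))) dec"
proof -
  define enc where "enc xs zs = cw (c (xs, zs))" for xs zs
  define dec where "dec ys w = map2 f (SOME xs. length xs = n \<and> Pn P n xs ys > 0 \<and> enc xs (map g ys) = w) ys"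
    for ys w
  have "prefix_free ((\<lambda>(xs, zs). enc xs zs) ` {(xs, zs). length xs = n \<and> length zs = n})"
    using prefix_free_image[OF cw]
    by (simp add: enc_def image_image char_vertices_def case_prod_beta)
  moreover have "dec ys (enc xs (map g ys)) = map2 f xs ys"
    if xy: "length xs = n" "length ys = n" "Pn P n xs ys > 0" for xs ys
  proof -
    define xs' where "xs' = (SOME xs'. length xs' = n \<and> Pn P n xs' ys > 0 \<and> enc xs' (map g ys) = enc xs (map g ys))"
    have xs': "length xs' = n" "Pn P n xs' ys > 0" "cw (c (xs', map g ys)) = cw (c (xs, map g ys))"
      using someI[of "\<lambda>xs'. length xs' = n \<and> Pn P n xs' ys > 0 \<and> enc xs' (map g ys) = enc xs (map g ys)" xs]
      using xy by (simp_all add: xs'_def enc_def)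
    have V: "(xs, map g ys) \<in> char_vertices n" "(xs', map g ys) \<in> char_vertices n"
      using xy xs' by (simp_all add: char_vertices_def)
    then have "c (xs', map g ys) = c (xs, map g ys)"
      using xs'(3) inj_onD[OF prefix_free_on_inj_on[OF cw]] by blast
    then have "\<not> char_adj P f g n (xs', map g ys) (xs, map g ys)"
      using col V unfolding is_coloring_def by blast
    then have "map2 f xs' ys = map2 f xs ys"
      using char_adj_if_map2_ne[OF P xs'(1) xy(1,2) xs'(2) xy(3)] by blast
    then show ?thesis
      by (simp add: dec_def xs'_def)
  qed
  moreover have "R = 1 / real n * (\<Sum>xs\<in>lists_of_length n. \<Sum>ys\<in>lists_of_length n.
                        Pn P n xs ys * real (length (enc xs (map g ys))))"
    using sum_Pn_eq_sum_char_dist[where h = "\<lambda>xs zs. real (length (cw (c (xs, zs))))" and P = P and g = g]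
    by (simp add: R_def enc_def)
  ultimately have "zero_error_code P f g n R enc dec"
    by (simp add: zero_error_code_def)
  then show ?thesis
    unfolding enc_def by blast
qed

lemma exists_code_near_char_chromatic_entropy:
  fixes P :: "'x::finite \<Rightarrow> 'y::finite \<Rightarrow> real" and g :: "'y \<Rightarrow> 'z::finite"
  assumes P: "is_joint_dist P"
  shows "\<exists>R enc dec. zero_error_code P f g n R enc dec \<and> R \<le> (char_chromatic_entropy P f g n + 3) / real n"
proof -
  let ?V = "char_vertices n :: ('x list \<times> 'z list) set"
  have Q: "finite_distribution ?V (char_dist P g n)"
    by (rule finite_distribution_char_dist[OF P])
  obtain c where c: "is_coloring ?V (char_adj P f g n) c"
    "entropy_of_map ?V (char_dist P g n) c < char_chromatic_entropy P f g n + 1"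
    using char_chromatic_entropy_approx[OF P zero_less_one, where n = n and f = f] by blast
  obtain cw where cw: "prefix_free_on (c ` ?V) cw"
    "\<And>k. k \<in> c ` ?V \<Longrightarrow> length (cw k) = shannon_length ?V (char_dist P g n) c k"
    using kraft_converse[OF _ kraft_sum_shannon_length[OF Q]] by auto
  define R where "R = (\<Sum>v\<in>?V. char_dist P g n v * real (length (cw (c v)))) / real n"
  obtain dec where "zero_error_code P f g n R (\<lambda>xs zs. cw (c (xs, zs))) dec"
    using zero_error_code_from_coloring[OF P c(1) cw(1)] unfolding R_def by blast
  moreover have "(\<Sum>v\<in>?V. char_dist P g n v * real (length (cw (c v)))) \<le> char_chromatic_entropy P f g n + 3"
    using expected_shannon_length_le[OF Q, of c] c(2) cw(2) by simp
  then have "R \<le> (char_chromatic_entropy P f g n + 3) / real n"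
    unfolding R_def by (simp add: divide_right_mono)
  ultimately show ?thesis
    by blast
qed

section \<open>Fekete's lemma and the optimal rate\<close>

lemma subadditive_mult_add:
  fixes a :: "nat \<Rightarrow> real"
  assumes sub: "\<And>m n. a (m + n) \<le> a m + a n"
  shows "a (q * k + r) \<le> real q * a k + a r"
proof (induction q)
  case (Suc q)
  have "a (Suc q * k + r) \<le> a k + a (q * k + r)"
    using sub[of k "q * k + r"] by (simp add: add.assoc)
  then show ?case
    using Suc by (simp add: algebra_simps)
qed simp

lemma subadditive_div_le:
  fixes a :: "nat \<Rightarrow> real"
  assumes nonneg: "\<And>n. a n \<ge> 0" and sub: "\<And>m n. a (m + n) \<le> a m + a n"
    and "k > 0" "n > 0"
  shows "a n / real n \<le> a k / real k + Max (a ` {..<k}) / real n"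
proof -
  have "a n \<le> real (n div k) * a k + a (n mod k)"
    using subadditive_mult_add[OF sub, of "n div k" k "n mod k"] by simp
  also have "a (n mod k) \<le> Max (a ` {..<k})"
    using \<open>k > 0\<close> by (intro Max_ge) auto
  also have "real (n div k) * a k \<le> real n / real k * a k"
    using \<open>k > 0\<close> nonneg[of k] by (intro mult_right_mono) (simp_all add: of_nat_div_le_of_nat)
  finally show ?thesis
    using \<open>k > 0\<close> \<open>n > 0\<close> by (simp add: field_simps)
qed

lemma subadditive_div_tendsto_Inf:
  fixes a :: "nat \<Rightarrow> real"
  assumes nonneg: "\<And>n. a n \<ge> 0" and sub: "\<And>m n. a (m + n) \<le> a m + a n"
  shows "(\<lambda>n. a n / real n) \<longlonglongrightarrow> Inf ((\<lambda>n. a n / real n) ` {0<..})"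
    (is "_ \<longlonglongrightarrow> ?L")
proof (rule order_tendstoI)
  have "bdd_below ((\<lambda>n. a n / real n) ` {0<..})"
    using nonneg by (intro bdd_belowI[of _ 0]) auto
  then have L: "?L \<le> a n / real n" if "n > 0" for n
    using that by (intro cInf_lower) auto
  fix y
  assume y: "y < ?L"
  show "\<forall>\<^sub>F n in sequentially. y < a n / real n"
    using eventually_gt_at_top[of 0] by eventually_elim (meson L y less_le_trans)
next
  fix y
  assume "?L < y"
  then obtain k where k: "k > 0" "a k / real k < y"
    using cInf_lessD[of "(\<lambda>n. a n / real n) ` {0<..}" y] by auto
  have "(\<lambda>n. a k / real k + Max (a ` {..<k}) / real n) \<longlonglongrightarrow> a k / real k"
    using tendsto_add[OF tendsto_const lim_const_over_n] by simp
  then have "\<forall>\<^sub>F n in sequentially. a k / real k + Max (a ` {..<k}) / real n < y"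
    using k(2) by (rule order_tendstoD)
  then show "\<forall>\<^sub>F n in sequentially. a n / real n < y"
    using eventually_gt_at_top[of 0]
    by eventually_elim (meson le_less_trans subadditive_div_le[OF nonneg sub k(1)])
qed

lemma optimal_rate_eqI:
  fixes a b :: "nat \<Rightarrow> real"
  assumes lower: "\<And>n R enc dec. n > 0 \<Longrightarrow> zero_error_code P f g n R enc dec \<Longrightarrow> a n \<le> R"
    and upper: "\<And>n. n > 0 \<Longrightarrow> \<exists>R enc dec. zero_error_code P f g n R enc dec \<and> R \<le> b n"
    and a: "a \<longlonglongrightarrow> L" and b: "b \<longlonglongrightarrow> L" and nonneg: "\<And>n. a n \<ge> 0"
  shows "optimal_rate P f g = L"
proof -
  define r where "r n = (SOME R. \<exists>enc dec. zero_error_code P f g n R enc dec \<and> R \<le> b n)" for n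
  have r: "\<exists>enc dec. zero_error_code P f g n (r n) enc dec \<and> r n \<le> b n" if "n > 0" for n
    unfolding r_def using someI_ex[OF upper[OF that]] .
  have "r \<longlonglongrightarrow> L"
  proof (rule tendsto_sandwich[OF _ _ a b])
    show "\<forall>\<^sub>F n in sequentially. a n \<le> r n"
      using eventually_gt_at_top[of 0] by eventually_elim (use r lower in blast)
    show "\<forall>\<^sub>F n in sequentially. r n \<le> b n"
      using eventually_gt_at_top[of 0] by eventually_elim (use r in blast)
  qed
  then have "achievable_rate P f g L"
    unfolding achievable_rate_def using r by blast
  moreover have "L \<ge> 0"
    using a nonneg by (intro LIMSEQ_le_const) auto
  moreover have "L \<le> R" if R: "achievable_rate P f g R" for R
  proof -
    obtain r' where r': "\<forall>n>0. \<exists>enc dec. zero_error_code P f g n (r' n) enc dec" "r' \<longlonglongrightarrow> R"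
      using R unfolding achievable_rate_def by blast
    have "\<forall>\<^sub>F n in sequentially. a n \<le> r' n"
      using eventually_gt_at_top[of 0] by eventually_elim (use r'(1) lower in blast)
    then show ?thesis
      using tendsto_le[OF _ r'(2) a] by simp
  qed
  ultimately show ?thesis
    unfolding optimal_rate_def by (intro cInf_eq_minimum) auto
qed

theorem theorem1:
  fixes P :: "'x::finite \<Rightarrow> 'y::finite \<Rightarrow> real"
    and f :: "'x \<Rightarrow> 'y \<Rightarrow> 'u::finite"
    and g :: "'y \<Rightarrow> 'z::finite"
  assumes "is_joint_dist P"
    and "full_marginals P"
  shows "(\<lambda>n. chromatic_entropy (char_vertices n) (char_adj P f g n) (char_dist P g n) / real n)
           \<longlonglongrightarrow> optimal_rate P f g"
proof -
  note P = assms(1)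
  let ?h = "\<lambda>n. char_chromatic_entropy P f g n / real n"
  have lim: "?h \<longlonglongrightarrow> Inf (?h ` {0<..})"
    by (intro subadditive_div_tendsto_Inf char_chromatic_entropy_nonneg char_chromatic_entropy_subadditive P)
  have "optimal_rate P f g = Inf (?h ` {0<..})"
  proof (rule optimal_rate_eqI)
    show "?h n \<le> R" if "n > 0" "zero_error_code P f g n R enc dec" for n R enc dec
      using char_chromatic_entropy_le_code_rate[OF P that] that(1) by (simp add: field_simps)
    show "\<exists>R enc dec. zero_error_code P f g n R enc dec \<and> R \<le> (char_chromatic_entropy P f g n + 3) / real n"
      if "n > 0" for n
      using exists_code_near_char_chromatic_entropy[OF P] .
    show "(\<lambda>n. (char_chromatic_entropy P f g n + 3) / real n) \<longlonglongrightarrow> Inf (?h ` {0<..})"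
      using tendsto_add[OF lim lim_const_over_n] by (simp add: add_divide_distrib)
    show "0 \<le> ?h n" for n
      by (intro divide_nonneg_nonneg char_chromatic_entropy_nonneg[OF P]) simp
  qed (rule lim)
  with lim show ?thesis
    by simp
qed

end
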